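(* For all $n\ge2$, $B(n)=a(n-2)+2$.
   Context: $\mathbb{N}=\{0,1,2,\dots\}$. Quet's sequence $A:\mathbb{N}\to\mathbb{N}$ is defined by $A(0)=0$, $A(1)=1$, and for $n\ge1$, $A(n+1)$ is the least natural number such that $A(n+1)\notin\{A(0),\dots,A(n)\}$ and $\sum_{0\le i\le n+1}A(i)\equiv 0 \pmod{n}$. Define $B(0)=0$, $B(1)=1$, and $B(n)=\frac{1}{n-1}\sum_{0\le i\le n}A(i)$ for $n\ge2$ (an integer by the defining congruence); first values $B=0,1,3,3,4,4,5,5,6,7,7,\dots$. Hofstadter's "married" sequences $a,b:\mathbb{N}\to\mathbb{N}$ are defined by $a(0)=1$, $b(0)=0$ and, for $n\ge1$, $b(n)=n-a(b(n-1))$ and $a(n)=n-b(a(n-1))$ (computing $b(n)$ before $a(n)$ at each step); first values $a=1,1,2,2,3,3,4,5,5,6,6,\dots$. *)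

theory Defs
  imports Main
begin

text \<open>Quet's sequence: Aseq n is the list [A(0), ..., A(n)].\<close>
fun Aseq :: "nat \<Rightarrow> nat list" where
  "Aseq 0 = [0]"
| "Aseq (Suc 0) = [0, 1]"
| "Aseq (Suc (Suc k)) =
     (let xs = Aseq (Suc k)
      in xs @ [LEAST x. x \<notin> set xs \<and> (sum_list xs + x) mod (Suc k) = 0])"

definition A :: "nat \<Rightarrow> nat" where
  "A n = Aseq n ! n"

definition B :: "nat \<Rightarrow> nat" where
  "B n = (if n = 0 then 0 else if n = 1 then 1
          else (\<Sum>i\<le>n. A i) div (n - 1))"

text \<open>Hofstadter's married sequences: ABseq n = ([a(0..n)], [b(0..n)]).\<close>
fun ABseq :: "nat \<Rightarrow> nat list \<times> nat list" where
  "ABseq 0 = ([1], [0])"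
| "ABseq (Suc m) =
     (let (as, bs) = ABseq m;
          bn = Suc m - as ! (bs ! m);
          bs' = bs @ [bn];
          an = Suc m - bs' ! (as ! m)
      in (as @ [an], bs'))"

definition ha :: "nat \<Rightarrow> nat" where
  "ha n = fst (ABseq n) ! n"

definition hb :: "nat \<Rightarrow> nat" where
  "hb n = snd (ABseq n) ! n"


end

theory Submission
  imports Defs
begin

text \<open>Put \<open>c\<^sub>k = a(k) + 2\<close>. One shows by strong induction that \<open>A(k + 3)\<close> is \<open>c\<^sub>k\<close> if
  \<open>a(k + 1) = a(k)\<close> and \<open>c\<^sub>k + (k + 2)\<close> if \<open>a(k + 1) = a(k) + 1\<close>; in both cases the partial
  sums satisfy \<open>A(0) + \<dots> + A(k + 2) = (k + 1) c\<^sub>k\<close>, which gives \<open>B(k + 2) = c\<^sub>k\<close>.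
  For the induction step, the sum condition forces \<open>A(k + 3) \<equiv> c\<^sub>k (mod k + 2)\<close>, so the
  candidates are \<open>c\<^sub>k\<close> and \<open>c\<^sub>k + (k + 2)\<close>, the latter exceeding all earlier terms. Hence
  everything reduces to: \<open>c\<^sub>k\<close> is an earlier term iff \<open>a\<close> rises at \<open>k\<close>. This is a property of
  the married sequences, proved from \<open>b(a(i) + i) = i\<close>, the fact that \<open>a\<close> and \<open>b\<close> move in
  steps of 0 or 1, and that \<open>a\<close> is never flat twice in a row.\<close>

section \<open>Hofstadter's married sequences\<close>

lemma length_ABseq: "length (fst (ABseq m)) = Suc m" "length (snd (ABseq m)) = Suc m"
  by (induction m) (auto simp: Let_def split: prod.splits)

lemma ABseq_Suc:
  "snd (ABseq (Suc m)) = snd (ABseq m) @ [Suc m - fst (ABseq m) ! (snd (ABseq m) ! m)]"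
  "fst (ABseq (Suc m)) = fst (ABseq m) @ [Suc m - snd (ABseq (Suc m)) ! (fst (ABseq m) ! m)]"
  by (auto simp: Let_def split: prod.splits)

declare ABseq.simps(2)[simp del]

lemma nth_ABseq: "i \<le> n \<Longrightarrow> fst (ABseq n) ! i = ha i \<and> snd (ABseq n) ! i = hb i"
proof (induction n)
  case 0
  then show ?case by (simp add: ha_def hb_def)
next
  case (Suc n)
  then show ?case
    using length_ABseq[of n]
    by (cases "i = Suc n") (simp_all add: ha_def hb_def ABseq_Suc nth_append)
qed

lemma hb_le: "hb m \<le> m"
  by (cases m) (simp_all add: hb_def ABseq_Suc length_ABseq nth_append)

lemma ha_le_Suc: "ha m \<le> Suc m"
  by (cases m) (simp_all add: ha_def ABseq_Suc length_ABseq nth_append)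

lemma ha_0 [simp]: "ha 0 = 1"
  by (simp add: ha_def)

lemma hb_0 [simp]: "hb 0 = 0"
  by (simp add: hb_def)

lemma hb_Suc: "hb (Suc m) + ha (hb m) = Suc m"
proof -
  have "hb (Suc m) = Suc m - ha (hb m)"
    using nth_ABseq[of m m] nth_ABseq[of "hb m" m] hb_le[of m]
    by (simp add: hb_def[of "Suc m"] ABseq_Suc length_ABseq nth_append)
  moreover have "ha (hb m) \<le> Suc m"
    using ha_le_Suc[of "hb m"] hb_le[of m] by simp
  ultimately show ?thesis by simp
qed

lemma ha_Suc: "ha (Suc m) + hb (ha m) = Suc m"
proof -
  have "ha (Suc m) = Suc m - hb (ha m)"
    using nth_ABseq[of m m] nth_ABseq[of "ha m" "Suc m"] ha_le_Suc[of m]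
    by (simp add: ha_def[of "Suc m"] ABseq_Suc length_ABseq nth_append)
  moreover have "hb (ha m) \<le> Suc m"
    using hb_le[of "ha m"] ha_le_Suc[of m] by simp
  ultimately show ?thesis by simp
qed

lemma hb_1 [simp]: "hb (Suc 0) = 0"
  using hb_Suc[of 0] by simp

lemma ha_1 [simp]: "ha (Suc 0) = 1"
  using ha_Suc[of 0] by simp

lemma ha_hb_unit_steps:
  "(hb (Suc n) = hb n \<or> hb (Suc n) = Suc (hb n)) \<and> (ha (Suc n) = ha n \<or> ha (Suc n) = Suc (ha n))"
proof (induction n rule: less_induct)
  case (less n)
  show ?case
  proof (cases n)
    case 0
    then show ?thesis by simp
  next
    case (Suc p)
    have IH_p: "(hb n = hb p \<or> hb n = Suc (hb p)) \<and> (ha n = ha p \<or> ha n = Suc (ha p))"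
      using less[of p] Suc by simp
    have hb_step: "hb (Suc n) = hb n \<or> hb (Suc n) = Suc (hb n)"
    proof (cases "hb n = hb p")
      case False
      then have "hb n = Suc (hb p)" using IH_p by simp
      moreover have "hb p < n" using hb_le[of p] Suc by simp
      ultimately show ?thesis
        using less[of "hb p"] hb_Suc[of n] hb_Suc[of p] Suc by auto
    qed (use hb_Suc[of n] hb_Suc[of p] Suc in simp)
    have ha_step: "ha (Suc n) = ha n \<or> ha (Suc n) = Suc (ha n)"
    proof (cases "ha n = ha p")
      case False
      then have "ha n = Suc (ha p)" using IH_p by simp
      moreover have "hb (Suc (ha p)) = hb (ha p) \<or> hb (Suc (ha p)) = Suc (hb (ha p))"
        using less[of "ha p"] hb_step ha_le_Suc[of p] Suc by (cases "ha p = n") auto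
      ultimately show ?thesis using ha_Suc[of n] ha_Suc[of p] Suc by auto
    qed (use ha_Suc[of n] ha_Suc[of p] Suc in simp)
    show ?thesis using ha_step hb_step by simp
  qed
qed

lemma ha_Suc_cases: "ha (Suc n) = ha n \<or> ha (Suc n) = Suc (ha n)"
  using ha_hb_unit_steps by blast

lemma ha_mono: "i \<le> j \<Longrightarrow> ha i \<le> ha j"
proof (induction j rule: dec_induct)
  case (step n)
  then show ?case using ha_Suc_cases[of n] by auto
qed simp

lemma ha_pos: "0 < ha i"
  using ha_mono[of 0 i] by simp

lemma ha_rise_after_flat: "ha (Suc k) = ha k \<Longrightarrow> ha (Suc (Suc k)) = Suc (ha (Suc k))"
  using ha_Suc[of k] ha_Suc[of "Suc k"] by simp

lemma hb_ha_add_self: "hb (ha i + i) = i"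
proof (induction i)
  case (Suc i)
  have step: "hb (Suc (ha i + i)) = Suc i"
    using hb_Suc[of "ha i + i"] Suc by simp
  moreover have "hb (Suc (Suc (ha i + i))) = Suc i" if "ha (Suc i) = Suc (ha i)"
    using hb_Suc[of "Suc (ha i + i)"] step that by simp
  ultimately show ?case
    using ha_Suc_cases[of i] by auto
qed simp

lemma hb_Suc_ha_add_self: "hb (Suc (ha i + i)) = Suc i"
  using hb_Suc[of "ha i + i"] hb_ha_add_self[of i] by simp

text \<open>The numbers \<open>ha i + i\<close> increase in steps of 1 or 2, a step of 2 occurring exactly
  where \<open>ha\<close> rises; hence they miss only the values \<open>Suc (ha i + i)\<close> at such \<open>i\<close>.\<close>

lemma ha_add_self_cover:
  "0 < v \<Longrightarrow> \<exists>i. v = ha i + i \<or> (v = Suc (ha i + i) \<and> ha (Suc i) = Suc (ha i))"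
proof (induction v)
  case (Suc v)
  show ?case
  proof (cases "v = 0")
    case True
    then show ?thesis by (intro exI[of _ 0]) simp
  next
    case False
    then obtain i where "v = ha i + i \<or> (v = Suc (ha i + i) \<and> ha (Suc i) = Suc (ha i))"
      using Suc.IH by blast
    then consider "v = ha i + i" "ha (Suc i) = Suc (ha i)"
      | "Suc v = ha (Suc i) + Suc i"
      using ha_Suc_cases[of i] by fastforce
    then show ?thesis by cases blast+
  qed
qed simp

lemma hb_flat_iff:
  assumes "0 < v"
  shows "hb (Suc v) = hb v \<longleftrightarrow> (\<exists>i. ha (Suc i) = Suc (ha i) \<and> v = Suc (ha i + i))"
proof
  assume flat: "hb (Suc v) = hb v"
  obtain i where "v = ha i + i \<or> (v = Suc (ha i + i) \<and> ha (Suc i) = Suc (ha i))"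
    using ha_add_self_cover[OF assms] by blast
  moreover have "v \<noteq> ha i + i"
    using flat hb_ha_add_self[of i] hb_Suc_ha_add_self[of i] by auto
  ultimately show "\<exists>i. ha (Suc i) = Suc (ha i) \<and> v = Suc (ha i + i)" by blast
next
  assume "\<exists>i. ha (Suc i) = Suc (ha i) \<and> v = Suc (ha i + i)"
  then obtain i where "ha (Suc i) = Suc (ha i)" "v = Suc (ha i + i)" by blast
  then show "hb (Suc v) = hb v"
    using hb_Suc_ha_add_self[of i] hb_ha_add_self[of "Suc i"] by simp
qed

lemma ha_rise_Suc_iff:
  assumes rise: "ha (Suc p) = Suc (ha p)"
  shows "ha (Suc (Suc p)) = Suc (ha (Suc p)) \<longleftrightarrow>
    (\<exists>i. ha (Suc i) = Suc (ha i) \<and> ha i + i + 2 = ha (Suc p))"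
proof -
  have "ha (Suc (Suc p)) = Suc (ha (Suc p)) \<longleftrightarrow> hb (Suc (ha p)) = hb (ha p)"
  proof -
    have "ha (Suc (Suc p)) + hb (Suc (ha p)) = Suc (Suc p)"
      using ha_Suc[of "Suc p"] rise by simp
    then show ?thesis using ha_Suc[of p] rise by linarith
  qed
  also have "\<dots> \<longleftrightarrow> (\<exists>i. ha (Suc i) = Suc (ha i) \<and> ha p = Suc (ha i + i))"
    using hb_flat_iff ha_pos by blast
  finally show ?thesis using rise by (simp add: eq_commute)
qed

section \<open>Quet's sequence\<close>

lemma length_Aseq: "length (Aseq n) = Suc n"
  by (induction n rule: Aseq.induct) (simp_all add: Let_def)

lemma Aseq_Suc: "Aseq (Suc n) = Aseq n @ [A (Suc n)]"
  by (cases n) (simp_all add: A_def Let_def nth_append length_Aseq)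

lemma Aseq_eq_map: "Aseq n = map A [0..<Suc n]"
proof (induction n)
  case (Suc n)
  then show ?case by (simp add: Aseq_Suc del: Aseq.simps upt_Suc) simp
qed (simp add: A_def)

lemma A_Suc_Suc:
  "A (Suc (Suc k)) = (LEAST x. x \<notin> A ` {..Suc k} \<and> (sum A {..Suc k} + x) mod Suc k = 0)"
proof -
  have "set (Aseq (Suc k)) = A ` {..Suc k}" "sum_list (Aseq (Suc k)) = sum A {..Suc k}"
    by (simp_all only: Aseq_eq_map set_map interv_sum_list_conv_sum_set_nat set_upt
        atLeast0LessThan lessThan_Suc_atMost)
  then show ?thesis
    using length_Aseq[of "Suc k"] by (simp add: A_def Let_def nth_append del: Aseq.simps(2))
qed

lemma A_0 [simp]: "A 0 = 0"
  by (simp add: A_def)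

lemma A_1 [simp]: "A (Suc 0) = 1"
  by (simp add: A_def)

lemma A_2 [simp]: "A 2 = 2"
proof -
  have "A ` {..Suc 0} = {0, 1}" using A_1 by (auto simp: atMost_Suc)
  then have "A (Suc (Suc 0)) = (LEAST x. x \<notin> {0::nat, 1})"
    by (simp add: A_Suc_Suc)
  also have "\<dots> = 2" by (rule Least_equality) auto
  finally show ?thesis by (simp add: numeral_2_eq_2)
qed

section \<open>The closed form\<close>

definition A_formula :: "nat \<Rightarrow> nat" where
  "A_formula i = (if ha (Suc i) = ha i then ha i + 2 else ha i + i + 4)"

lemma A_formula_less: "i < k \<Longrightarrow> A_formula i < ha k + k + 4"
  using ha_mono[of i k] by (auto simp: A_formula_def)

lemma ha_add_2_in_A_formula_image_iff:
  "ha k + 2 \<in> A_formula ` {..<k} \<longleftrightarrow> ha (Suc k) = Suc (ha k)"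
proof
  assume "ha k + 2 \<in> A_formula ` {..<k}"
  then obtain i where i: "i < k" "A_formula i = ha k + 2"
    by (metis imageE lessThan_iff)
  show "ha (Suc k) = Suc (ha k)"
  proof (rule ccontr)
    assume "ha (Suc k) \<noteq> Suc (ha k)"
    then have flat_k: "ha (Suc k) = ha k" using ha_Suc_cases[of k] by simp
    obtain p where p: "k = Suc p" using i by (cases k) auto
    have rise_p: "ha (Suc p) = Suc (ha p)"
      using ha_rise_after_flat[of p] ha_Suc_cases[of p] flat_k p by auto
    show False
    proof (cases "ha (Suc i) = ha i")
      case True
      then show False
        using i rise_p ha_mono[of i p] p by (simp add: A_formula_def)
    next
      case False
      then have "ha (Suc i) = Suc (ha i)" "ha i + i + 2 = ha (Suc p)"
        using ha_Suc_cases[of i] i p by (auto simp: A_formula_def)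
      then have "ha (Suc (Suc p)) = Suc (ha (Suc p))"
        using ha_rise_Suc_iff[OF rise_p] by blast
      then show False using flat_k p by simp
    qed
  qed
next
  assume rise_k: "ha (Suc k) = Suc (ha k)"
  obtain p where p: "k = Suc p" using rise_k by (cases k) auto
  show "ha k + 2 \<in> A_formula ` {..<k}"
  proof (cases "ha (Suc p) = ha p")
    case True
    then show ?thesis using p by (auto simp: A_formula_def)
  next
    case False
    then have "ha (Suc p) = Suc (ha p)" using ha_Suc_cases[of p] by simp
    from ha_rise_Suc_iff[OF this] obtain i
      where i: "ha (Suc i) = Suc (ha i)" "ha i + i + 2 = ha k"
      using rise_k p by auto
    have "i < k"
      using i ha_mono[of k i] by (cases "k \<le> i") auto
    moreover have "A_formula i = ha k + 2"
      using i by (simp add: A_formula_def)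
    ultimately show ?thesis by (metis image_eqI lessThan_iff)
  qed
qed

lemma atMost_add_2_eq: "{..k + 2} = {0, 1, 2} \<union> (\<lambda>i. i + 3) ` {..<k::nat}"
  by (induction k) (auto simp: lessThan_Suc atMost_Suc numeral_2_eq_2 numeral_3_eq_3)

lemma sum_A_atMost:
  assumes "\<forall>i<k. A (i + 3) = A_formula i"
  shows "(\<Sum>i\<le>k + 2. A i) = (k + 1) * (ha k + 2)"
  using assms
proof (induction k)
  case 0
  then show ?case using A_2 by (simp add: atMost_add_2_eq[of 0] numeral_2_eq_2)
next
  case (Suc k)
  then have "(\<Sum>i\<le>Suc k + 2. A i) = (k + 1) * (ha k + 2) + A_formula k"
    by (simp add: numeral_3_eq_3)
  also have "\<dots> = (Suc k + 1) * (ha (Suc k) + 2)"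
    using ha_Suc_cases[of k] by (auto simp: A_formula_def)
  finally show ?case .
qed

lemma eq_if_mod_eq_close:
  fixes x y m :: nat
  assumes "x mod m = y mod m" "x < y + m" "y < x + m"
  shows "x = y"
proof -
  have "b - a = 0" if "a \<le> b" "a mod m = b mod m" "b < a + m" for a b :: nat
    using that mod_eq_dvd_iff_nat[of a b m] by (auto dest: dvd_imp_le)
  then show ?thesis using assms by (metis diff_is_0_eq le_antisym nat_le_linear)
qed

text \<open>The next term must be congruent to \<open>ha k + 2\<close> modulo \<open>k + 2\<close>; that value is taken exactly
  when \<open>ha\<close> rises at \<open>k\<close>, and then the next candidate \<open>ha k + k + 4\<close> exceeds all earlier terms.\<close>

lemma A_step:
  assumes IH: "\<forall>i<k. A (i + 3) = A_formula i"
  shows "A (k + 3) = A_formula k"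
proof -
  define c where "c = ha k + 2"
  define U where "U = A ` {..k + 2}"
  have U: "U = {0, 1, 2} \<union> A_formula ` {..<k}"
    using IH unfolding U_def atMost_add_2_eq by (simp add: image_Un image_image)
  have sum: "(\<Sum>i\<le>k + 2. A i) = (k + 1) * c"
    using sum_A_atMost[OF IH] c_def by simp
  have A_least: "A (k + 3) = (LEAST x. x \<notin> U \<and> ((k + 1) * c + x) mod (k + 2) = 0)"
    using A_Suc_Suc[of "Suc k"] sum by (simp add: U_def numeral_3_eq_3 numeral_2_eq_2)
  have formula_cases: "A_formula k = c \<and> ha (Suc k) = ha k \<or>
      A_formula k = c + (k + 2) \<and> ha (Suc k) = Suc (ha k)"
    using ha_Suc_cases[of k] by (auto simp: A_formula_def c_def)
  have c_in_U_iff: "c \<in> U \<longleftrightarrow> ha (Suc k) = Suc (ha k)"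
    using ha_add_2_in_A_formula_image_iff[of k] ha_pos[of k] by (auto simp: U c_def)
  have "c + (k + 2) \<notin> U"
    using A_formula_less[of _ k] by (fastforce simp: U c_def)
  then have formula_notin: "A_formula k \<notin> U"
    using formula_cases c_in_U_iff by auto
  have "(k + 1) * c + A_formula k \<in> {(k + 2) * c, (k + 2) * (c + 1)}"
    using formula_cases by (auto simp: algebra_simps)
  then have formula_dvd: "((k + 1) * c + A_formula k) mod (k + 2) = 0"
    by (metis emptyE insertE mod_mult_self1_is_0)
  have "A_formula k \<le> y" if y: "y \<notin> U" "((k + 1) * c + y) mod (k + 2) = 0" for y
  proof (rule ccontr)
    assume less: "\<not> A_formula k \<le> y"
    have "y mod (k + 2) = ((k + 2) * c + y) mod (k + 2)"
      by (rule mod_mult_self4[symmetric])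
    also have "\<dots> = ((k + 1) * c + y + c) mod (k + 2)"
      by (simp add: algebra_simps)
    also have "\<dots> = (((k + 1) * c + y) mod (k + 2) + c) mod (k + 2)"
      by (rule mod_add_left_eq[symmetric])
    also have "\<dots> = c mod (k + 2)"
      using y(2) by simp
    finally have "y mod (k + 2) = c mod (k + 2)" .
    moreover have "y < c + (k + 2)"
      using less formula_cases by auto
    moreover have "c < y + (k + 2)"
      using y(1) ha_le_Suc[of k] by (auto simp: U c_def)
    ultimately have "y = c"
      by (rule eq_if_mod_eq_close)
    then show False using less y(1) formula_cases c_in_U_iff by auto
  qed
  then show ?thesis
    unfolding A_least by (intro Least_equality) (use formula_notin formula_dvd in auto)
qed

lemma A_eq_A_formula: "A (i + 3) = A_formula i"
proof (induction i rule: less_induct)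
  case (less i)
  then show ?case using A_step by blast
qed

theorem theorem10:
  fixes n :: nat
  assumes "n \<ge> 2"
  shows "B n = ha (n - 2) + 2"
proof -
  obtain k where k: "n = k + 2" using assms by (metis le_add_diff_inverse2)
  have sum: "(\<Sum>i\<le>k + 2. A i) = (k + 1) * (ha k + 2)"
    using sum_A_atMost A_eq_A_formula by blast
  have "B n = (\<Sum>i\<le>k + 2. A i) div (k + 1)"
    using k by (simp add: B_def)
  also have "\<dots> = ha k + 2"
    unfolding sum by (rule nonzero_mult_div_cancel_left) simp
  finally show ?thesis using k by simp
qed

end
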